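(* Let $N\ge0$ and let $(X,Z)$ be complex $N\times N$ matrices with $\operatorname{rank}([X,Z]+I)=1$ and all eigenvalues of $Z$ in the open unit disk. Put $b^C(X,Z)=(I+Z^t,\;X^t(I+Z^t))$. Then $b^C(X,Z)\in C_N^{\rm trig}$ and $\beta^{\rm trig}(b^C(X,Z))=b(\beta(X,Z))$; that is, the stationary Baker–Akhiezer functions satisfy $\psi_{\beta^{\rm trig}(b^C(X,Z))}(x,z)=\psi_{\beta(X,Z)}(z,e^x-1)$. In other words the square formed by $\beta:\bigcup_NC_N\to{\rm Fl}^{\rm ad}$, $b^C:\bigcup_NC_N\to\bigcup_NC_N^{\rm trig}$, $b:{\rm Fl}^{\rm ad}\to{\rm Gr}^{\rm trig}$ and $\beta^{\rm trig}:\bigcup_NC_N^{\rm trig}\to{\rm Gr}^{\rm trig}$ commutes.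
   Context: $C_N^{\rm trig}$ is the set of pairs $(X,Z)$, $X\in GL(N,\mathbb{C})$, $Z\in gl(N,\mathbb{C})$, with $\operatorname{rank}(XZX^{-1}-Z+I)=1$, modulo simultaneous conjugation; $C_N$ is the set of pairs with $\operatorname{rank}([X,Z]+I)=1$ and spectrum of $Z$ in the open unit disk, modulo simultaneous conjugation. Segal–Wilson setting: $S^1$ unit circle, $H=L^2(S^1)=H_+\oplus H_-$, ${\rm Gr}$ the closed $W\subset H$ with $W\to H_+$ Fredholm of index $0$ and $W\to H_-$ compact; $\exp(t,z)=\exp(\sum_kt_kz^k)$; the Baker–Akhiezer function $\psi_W(t,z)=\exp(t,z)\tilde\psi_W(t,z)$, $\tilde\psi_W$ the unique element of $\exp^{-1}(t,z)W$ projecting to $1$; the stationary one $\psi_W(x,z)=\psi_W((x,0,0,\dots),z)$; the tau function $\tau_W$ (up to constant) with $\psi_W(t,z)=\exp(t,z)\tau_W(t_1-\frac1z,t_2-\frac1{2z^2},\dots)/\tau_W(t)$. $A_W=\{f$ analytic near $S^1:fW^{\rm alg}\subset W^{\rm alg}\}$, $W^{\rm alg}$ the finite-order elements of $W$; ${\rm Gr}^{\rm rat}$: $\operatorname{Spec}A_W$ rational; ${\rm Gr}^{\rm ad}$: $W\in{\rm Gr}^{\rm rat}$ with $\mathbb{C}\to\operatorname{Spec}(A_W)$ bijective. ${\rm Gr}^{\rm trig}$: $W\in{\rm Gr}^{\rm rat}$ with $\tau_W(t)=\det\{I-X\exp\{\sum_kt_k((Z-I)^k-Z^k)\}\}$ for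 some $(X,Z)\in C_N^{\rm trig}$; for such $(X,Z)$, $\beta^{\rm trig}(X,Z)$ is this space $W$, whose stationary Baker–Akhiezer function is $\psi_W(x,z)=e^{xz}\det\{I-X(e^xI-X)^{-1}(zI-Z)^{-1}\}$. For $W\in{\rm Gr}^{\rm ad}$ put $\psi(n,t,z)=(1+z)^n\exp(t,z)\tau_W(t_1+n-\frac1z,t_2-\frac n2-\frac1{2z^2},t_3+\frac n3-\frac1{3z^3},\dots)/\tau_W(t_1+n,t_2-\frac n2,t_3+\frac n3,\dots)$ and let $V_n$ be the closure of the span of $\psi(m,0,z)$, $m\ge n$; ${\rm Fl}^{\rm ad}$ is the set of the resulting flags $\mathcal{V}=(V_n)$, with stationary Baker–Akhiezer function $\psi_{\mathcal{V}}(n,z)=\psi(n,0,z)$. $\beta(X,Z)$ for $(X,Z)\in C_N$ is the adelic flag with $\psi_{\mathcal{V}}(n,z)=(1+z)^n\det\{I+(X-n(I+Z)^{-1})^{-1}(zI-Z)^{-1}\}$. The bispectral map $b:{\rm Fl}^{\rm ad}\to{\rm Gr}^{\rm trig}$ sends $\mathcal{V}$ to the space $b(\mathcal{V})$ with stationary Baker–Akhiezer function $\psi_{b(\mathcal{V})}(x,z)=\psi_{\mathcal{V}}(z,e^x-1)$. *)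

theory Defs
  imports "HOL-Analysis.Analysis"
begin

text \<open>Complex N x N matrices are rendered as complex^'n^'n with 'n a finite index type
  (N = CARD('n) \<ge> 1; the case N = 0 is vacuous since rank([X,Z]+I)=1 is impossible).\<close>

definition is_eigenvalue :: "complex^'n^'n \<Rightarrow> complex \<Rightarrow> bool" where
  "is_eigenvalue A c \<longleftrightarrow> (\<exists>v. v \<noteq> 0 \<and> A *v v = c *s v)"

definition in_CN :: "complex^'n^'n \<Rightarrow> complex^'n^'n \<Rightarrow> bool" where
  "in_CN X Z \<longleftrightarrow> rank (X ** Z - Z ** X + mat 1) = 1 \<and>
                 (\<forall>c. is_eigenvalue Z c \<longrightarrow> cmod c < 1)"

definition in_CN_trig :: "complex^'n^'n \<Rightarrow> complex^'n^'n \<Rightarrow> bool" where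
  "in_CN_trig X Z \<longleftrightarrow> invertible X \<and> rank (X ** Z ** matrix_inv X - Z + mat 1) = 1"

definition bC :: "complex^'n^'n \<Rightarrow> complex^'n^'n \<Rightarrow> (complex^'n^'n) \<times> (complex^'n^'n)" where
  "bC X Z = (mat 1 + transpose Z, transpose X ** (mat 1 + transpose Z))"

definition psi_trig :: "complex^'n^'n \<Rightarrow> complex^'n^'n \<Rightarrow> complex \<Rightarrow> complex \<Rightarrow> complex" where
  "psi_trig X Z x z = exp (x * z) *
     det (mat 1 - X ** matrix_inv (mat (exp x) - X) ** matrix_inv (mat z - Z))"

definition psi_flag :: "complex^'n^'n \<Rightarrow> complex^'n^'n \<Rightarrow> int \<Rightarrow> complex \<Rightarrow> complex" where
  "psi_flag X Z n w = (1 + w) powi n *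
     det (mat 1 + matrix_inv (X - mat (of_int n) ** matrix_inv (mat 1 + Z)) ** matrix_inv (mat w - Z))"

text \<open>Stationary Baker--Akhiezer function of $b(\beta(X,Z))$, i.e. $\psi_{\beta(X,Z)}(z, e^x - 1)$,
  where the discrete variable n is replaced by the continuous z; the factor
  $(1+w)^n$ at $w = e^x-1$ equals $e^{xn}$ and is continued as $e^{xz}$.\<close>
definition psi_b_flag :: "complex^'n^'n \<Rightarrow> complex^'n^'n \<Rightarrow> complex \<Rightarrow> complex \<Rightarrow> complex" where
  "psi_b_flag X Z x z = exp (x * z) *
     det (mat 1 + matrix_inv (X - mat z ** matrix_inv (mat 1 + Z)) ** matrix_inv (mat (exp x - 1) - Z))"

end

theory Submission
  imports Defs
begin

(* Since -1 is not an eigenvalue of Z, the matrix B = I + Z is invertible, and b^C(X,Z) = (B^t, X^t B^t).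
   Conjugating X^t B^t by B^t gives B^t X^t, so B^t (X^t B^t) B^-t - X^t B^t + I is the transpose of
   X B - B X + I = [X,Z] + I, which has rank one. For the Baker-Akhiezer functions, put
   W = (e^x - 1) I - Z and P = z I - B X; then e^x I - B^t = W^t, z I - X^t B^t = P^t and
   (X - z B^-1)^-1 = -P^-1 B. Transposing the determinant in psi_trig and using that B commutes
   with W turns det(I - B^t W^-t P^-t) into det(I + (X - z B^-1)^-1 W^-1). The invertibility of
   W and of X - z B^-1 assumed in the theorem is therefore automatic. *)

lemma matrix_add_rdistrib: "((A::'a::semiring_1^'n^'m) + B) ** C = A ** C + B ** C"
  by (simp add: matrix_matrix_mult_def vec_eq_iff sum.distrib algebra_simps)

lemma matrix_diff_ldistrib: "(A::'a::ring_1^'n^'m) ** (B - C) = A ** B - A ** C"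
  by (simp add: matrix_matrix_mult_def vec_eq_iff sum_subtractf algebra_simps)

lemma matrix_diff_rdistrib: "((A::'a::ring_1^'n^'m) - B) ** C = A ** C - B ** C"
  by (simp add: matrix_matrix_mult_def vec_eq_iff sum_subtractf algebra_simps)

lemma matrix_mul_lneg: "(- (A::'a::ring_1^'n^'m)) ** B = - (A ** B)"
  by (simp add: matrix_matrix_mult_def vec_eq_iff sum_negf)

lemma matrix_mul_rneg: "(A::'a::ring_1^'n^'m) ** (- B) = - (A ** B)"
  by (simp add: matrix_matrix_mult_def vec_eq_iff sum_negf)

lemma mat_matrix_mul_commute: "mat k ** (A::'a::comm_semiring_1^'n^'n) = A ** mat k"
  by (simp add: matrix_matrix_mult_def mat_def vec_eq_iff if_distrib if_distribR
      sum.delta sum.delta' mult.commute cong: if_cong)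

lemma diff_mat: "mat a - mat b = (mat (a - b) :: 'a::ring_1^'n^'n)"
  by (simp add: mat_def vec_eq_iff)

lemma transpose_add: "transpose ((A::'a::semiring_1^'n^'m) + B) = transpose A + transpose B"
  by (simp add: transpose_def vec_eq_iff)

lemma transpose_diff: "transpose ((A::'a::ring_1^'n^'m) - B) = transpose A - transpose B"
  by (simp add: transpose_def vec_eq_iff)

lemma matrix_inv_right:
  fixes A :: "'a::field^'n^'n"
  assumes "invertible A"
  shows "A ** matrix_inv A = mat 1"
  using someI_ex[OF assms[unfolded invertible_def]] by (simp add: matrix_inv_def)

lemma matrix_inv_left:
  fixes A :: "'a::field^'n^'n"
  assumes "invertible A"
  shows "matrix_inv A ** A = mat 1"
  using someI_ex[OF assms[unfolded invertible_def]] by (simp add: matrix_inv_def)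

lemma matrix_inv_unique:
  fixes A R :: "'a::field^'n^'n"
  assumes "R ** A = mat 1"
  shows "matrix_inv A = R"
proof -
  have "invertible A"
    using assms invertible_left_inverse by blast
  have "matrix_inv A = (matrix_inv A ** A) ** R"
    using assms matrix_left_right_inverse by (metis matrix_mul_assoc matrix_mul_rid)
  then show ?thesis
    using matrix_inv_left[OF \<open>invertible A\<close>] by simp
qed

lemma invertible_transpose_iff:
  fixes A :: "'a::field^'n^'n"
  shows "invertible (transpose A) \<longleftrightarrow> invertible A"
  by (metis invertible_left_inverse invertible_right_inverse matrix_transpose_mul
      transpose_mat transpose_transpose)

lemma matrix_inv_transpose:
  fixes A :: "'a::field^'n^'n"
  assumes "invertible A"
  shows "matrix_inv (transpose A) = transpose (matrix_inv A)"
  by (metis matrix_inv_right[OF assms] matrix_inv_unique matrix_transpose_mul transpose_mat)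

lemma matrix_inv_commute:
  fixes A B :: "'a::field^'n^'n"
  assumes "invertible A" and "A ** B = B ** A"
  shows "matrix_inv A ** B = B ** matrix_inv A"
proof -
  have "matrix_inv A ** B = matrix_inv A ** B ** (A ** matrix_inv A)"
    by (simp add: matrix_inv_right[OF assms(1)])
  also have "\<dots> = matrix_inv A ** (A ** B) ** matrix_inv A"
    by (simp add: assms(2) matrix_mul_assoc)
  also have "\<dots> = B ** matrix_inv A"
    by (simp add: matrix_inv_left[OF assms(1)] matrix_mul_assoc)
  finally show ?thesis .
qed

(* The library's rank_transpose covers only real matrices; rank one is all that is needed here. *)
definition outer_product :: "'a::times^'m \<Rightarrow> 'a^'n \<Rightarrow> 'a^'n^'m" where
  "outer_product u v = (\<chi> i j. u $ i * v $ j)"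

lemma transpose_outer_product:
  "transpose (outer_product u v) = outer_product v (u :: 'a::comm_semiring_1^'m)"
  by (simp add: outer_product_def transpose_def vec_eq_iff mult.commute)

lemma rank_outer_product:
  fixes u :: "'a::field^'m" and v :: "'a^'n"
  assumes "u \<noteq> 0" and "v \<noteq> 0"
  shows "rank (outer_product u v) = 1"
proof -
  have row: "row i (outer_product u v) = u $ i *s v" for i
    by (simp add: row_def outer_product_def vec_eq_iff)
  have "rows (outer_product u v) \<subseteq> vec.span {v}"
    by (auto simp: rows_def row vec.span_singleton)
  then have "vec.dim (rows (outer_product u v)) \<le> 1"
    using vec.dim_le_card[of _ "{v}"] by simp
  moreover
  obtain i where "u $ i \<noteq> 0"
    using assms(1) by (metis vec_eq_iff zero_index)
  then have "vec.independent {row i (outer_product u v)}"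
    using assms(2) by (simp add: row)
  then have "1 \<le> vec.dim (rows (outer_product u v))"
    using vec.independent_card_le_dim[of _ "rows (outer_product u v)"] by (force simp: rows_def)
  ultimately show ?thesis
    by (simp add: row_rank_def_gen)
qed

lemma rank_eq_1_imp_outer_product:
  fixes A :: "'a::field^'n^'m"
  assumes "rank A = 1"
  obtains u v where "u \<noteq> 0" "v \<noteq> 0" "A = outer_product u v"
proof -
  obtain B where B: "vec.independent B" "rows A \<subseteq> vec.span B" "card B = 1"
    using vec.basis_exists[of "rows A"] assms by (metis row_rank_def_gen)
  then obtain v where "B = {v}"
    by (auto simp: card_1_singleton_iff)
  have "\<exists>c. A $ i = c *s v" for i
  proof -
    have "row i A \<in> vec.span {v}"
      using B(2) \<open>B = {v}\<close> by (auto simp: rows_def)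
    then show ?thesis
      by (auto simp: row_def vec.span_singleton vec_lambda_eta)
  qed
  then obtain c where c: "\<And>i. A $ i = c i *s v"
    by metis
  have A: "A = outer_product (\<chi> i. c i) v"
    by (simp add: outer_product_def vec_eq_iff c)
  have "A \<noteq> 0"
    using assms by (auto simp: row_rank_def_gen rows_def row_def)
  then have "(\<chi> i. c i) \<noteq> 0"
    by (auto simp: A outer_product_def vec_eq_iff)
  moreover have "v \<noteq> 0"
    using B(1) \<open>B = {v}\<close> by auto
  ultimately show ?thesis
    using A that by blast
qed

lemma rank_transpose_eq_1:
  fixes A :: "'a::field^'n^'m"
  assumes "rank A = 1"
  shows "rank (transpose A) = 1"
  using assms by (metis rank_eq_1_imp_outer_product rank_outer_product transpose_outer_product)

lemma invertible_mat_1_plus: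
  fixes Z :: "complex^'n^'n"
  assumes "\<not> is_eigenvalue Z (-1)"
  shows "invertible (mat 1 + Z)"
proof -
  have "v = 0" if "(mat 1 + Z) *v v = 0" for v
  proof -
    have "Z *v v = (-1) *s v"
      using that by (simp add: matrix_vector_mult_add_rdistrib vec_eq_iff add_eq_0_iff)
    then show ?thesis
      using assms by (auto simp: is_eigenvalue_def)
  qed
  then show ?thesis
    using invertible_left_inverse matrix_left_invertible_ker by blast
qed

lemma in_CN_trig_bC:
  fixes X Z :: "complex^'n^'n"
  assumes "invertible (mat 1 + Z)" and "rank (X ** Z - Z ** X + mat 1) = 1"
  shows "in_CN_trig (fst (bC X Z)) (snd (bC X Z))"
proof -
  define B where "B = mat 1 + Z"
  have bC: "bC X Z = (transpose B, transpose X ** transpose B)"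
    by (simp add: bC_def B_def transpose_add)
  have "invertible (transpose B)"
    using assms(1) by (simp add: B_def invertible_transpose_iff)
  then have "transpose B ** (transpose X ** transpose B) ** matrix_inv (transpose B)
      = transpose B ** transpose X"
    by (simp add: matrix_inv_right flip: matrix_mul_assoc)
  moreover have "X ** B - B ** X = X ** Z - Z ** X"
    by (simp add: B_def matrix_add_ldistrib matrix_add_rdistrib)
  ultimately have "transpose B ** (transpose X ** transpose B) ** matrix_inv (transpose B)
      - transpose X ** transpose B + mat 1 = transpose (X ** Z - Z ** X + mat 1)"
    by (metis matrix_transpose_mul transpose_add transpose_diff transpose_mat)
  then show ?thesis
    using assms(2) \<open>invertible (transpose B)\<close>
    by (simp add: in_CN_trig_def bC rank_transpose_eq_1)
qed

lemma det_transpose_bispectral: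
  fixes X Z :: "'a::field^'n^'n"
  assumes "invertible (mat 1 + Z)" and "invertible (mat w - Z)"
    and "invertible (mat z - (mat 1 + Z) ** X)"
  shows "det (mat 1 - transpose (mat 1 + Z) ** matrix_inv (transpose (mat w - Z))
            ** matrix_inv (transpose (mat z - (mat 1 + Z) ** X)))
       = det (mat 1 + matrix_inv (X - mat z ** matrix_inv (mat 1 + Z)) ** matrix_inv (mat w - Z))"
proof -
  define B W P where "B = mat 1 + Z" and "W = mat w - Z" and "P = mat z - B ** X"
  have "invertible W" "invertible P"
    using assms(2,3) by (simp_all add: W_def P_def B_def)
  have BM: "B ** (X - mat z ** matrix_inv B) = - P"
    using matrix_inv_right[OF assms(1)]
    by (simp add: B_def P_def matrix_diff_ldistrib matrix_mul_assoc mat_matrix_mul_commute)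
  have "(- (matrix_inv P ** B)) ** (X - mat z ** matrix_inv B)
      = - (matrix_inv P ** (B ** (X - mat z ** matrix_inv B)))"
    by (simp add: matrix_mul_lneg matrix_mul_assoc)
  also have "\<dots> = mat 1"
    by (simp add: BM matrix_mul_rneg matrix_inv_left[OF \<open>invertible P\<close>])
  finally have "(- (matrix_inv P ** B)) ** (X - mat z ** matrix_inv B) = mat 1" .
  then have M_inv: "matrix_inv (X - mat z ** matrix_inv B) = - (matrix_inv P ** B)"
    by (rule matrix_inv_unique)
  have "W ** B = B ** W"
    by (simp add: B_def W_def matrix_add_ldistrib matrix_add_rdistrib matrix_diff_ldistrib
        matrix_diff_rdistrib mat_matrix_mul_commute)
  then have WB: "matrix_inv W ** B = B ** matrix_inv W"
    using \<open>invertible W\<close> by (simp add: matrix_inv_commute)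
  have "transpose (mat 1 - transpose B ** matrix_inv (transpose W) ** matrix_inv (transpose P))
      = mat 1 - matrix_inv P ** (matrix_inv W ** B)"
    using \<open>invertible W\<close> \<open>invertible P\<close>
    by (simp add: transpose_diff matrix_transpose_mul matrix_inv_transpose matrix_mul_assoc)
  also have "\<dots> = mat 1 + matrix_inv (X - mat z ** matrix_inv B) ** matrix_inv W"
    by (simp add: M_inv WB matrix_mul_lneg matrix_mul_assoc)
  finally show ?thesis
    by (metis B_def W_def P_def det_transpose)
qed

lemma psi_trig_bC:
  fixes X Z :: "complex^'n^'n"
  assumes "invertible (mat 1 + Z)"
    and "invertible (mat (exp x) - fst (bC X Z))" and "invertible (mat z - snd (bC X Z))"
  shows "psi_trig (fst (bC X Z)) (snd (bC X Z)) x z = psi_b_flag X Z x z"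
proof -
  have W: "mat (exp x) - fst (bC X Z) = transpose (mat (exp x - 1) - Z)"
    by (simp add: bC_def transpose_diff transpose_add flip: diff_mat)
  have P: "mat z - snd (bC X Z) = transpose (mat z - (mat 1 + Z) ** X)"
    by (simp add: bC_def transpose_diff transpose_add matrix_transpose_mul)
  have "fst (bC X Z) = transpose (mat 1 + Z)"
    by (simp add: bC_def transpose_add)
  moreover have "invertible (mat (exp x - 1) - Z)" "invertible (mat z - (mat 1 + Z) ** X)"
    using assms(2,3) by (simp_all only: W P invertible_transpose_iff)
  ultimately show ?thesis
    unfolding psi_trig_def psi_b_flag_def W P
    using det_transpose_bispectral[OF assms(1)] by simp
qed

theorem mainTheorem5:
  fixes X Z :: "complex^'n^'n"
  assumes "in_CN X Z"
  shows "in_CN_trig (fst (bC X Z)) (snd (bC X Z)) \<and>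
    (\<forall>x z::complex.
       invertible (mat (exp x) - fst (bC X Z)) \<longrightarrow>
       invertible (mat z - snd (bC X Z)) \<longrightarrow>
       invertible (X - mat z ** matrix_inv (mat 1 + Z)) \<longrightarrow>
       invertible (mat (exp x - 1) - Z) \<longrightarrow>
       psi_trig (fst (bC X Z)) (snd (bC X Z)) x z = psi_b_flag X Z x z)"
proof -
  have "\<not> is_eigenvalue Z (-1)"
    using assms by (auto simp: in_CN_def)
  then have "invertible (mat 1 + Z)"
    by (rule invertible_mat_1_plus)
  moreover have "rank (X ** Z - Z ** X + mat 1) = 1"
    using assms by (simp add: in_CN_def)
  ultimately show ?thesis
    by (simp add: in_CN_trig_bC psi_trig_bC)
qed

end
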